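(* Let $c\in\mathbb{C}(t)\setminus\{0,1,t\}$ and $F_n$, $P_1$ as in the context. Write $F_n(t,1)=(E_n+D_nt+O(t^2),\;C_n+O(t))$ as polynomials in $t$. Then $E_n=P_1(0,1)^{4^{n-1}}$ for all $n\ge1$, and $$\limsup_{n\to\infty}|C_n|^{1/4^{n-1}}\le|P_1(0,1)|,\qquad\limsup_{n\to\infty}|D_n|^{1/4^{n-1}}\le|P_1(0,1)|.$$
   Context: $F_{t_1,t_2}(z,w)=\big((t_1w^2-t_2z^2)^2,\;4t_2zw(w-z)(t_1w-t_2z)\big)$. $C=(c_1,c_2)$ is a pair of coprime homogeneous polynomials in $(t_1,t_2)$ of equal degree with $c(t)=c_1(t,1)/c_2(t,1)$. $F_1=F_{t_1,t_2}(C)/\gcd(F_{t_1,t_2}(C))=(P_1,Q_1)$ (dividing by the gcd of the two coordinates), and $F_{n+1}=F_{t_1,t_2}(F_n)/t_2^2$ (substituting the coordinates of $F_n$ for $(z,w)$). *)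

theory Defs
  imports Complex_Main "HOL-Computational_Algebra.Polynomial_Factorial" "HOL-Computational_Algebra.Field_as_Ring"
    "HOL-Library.Liminf_Limsup" "HOL-Library.Extended_Real"
begin

text \<open>Everything is written in dehomogenized form: a binary form \<open>P(t1,t2)\<close>
  is represented by the univariate polynomial \<open>P(t,1)\<close>.  Setting \<open>t2 = 1\<close>,
  the map \<open>F_{t1,t2}\<close> becomes \<open>F_{t,1}\<close> below and the division by \<open>t2^2\<close>
  becomes trivial.\<close>

definition tvar :: "complex poly" where
  "tvar = [:0, 1:]"

definition Fmap :: "complex poly \<times> complex poly \<Rightarrow> complex poly \<times> complex poly" where
  "Fmap zw = (case zw of (z, w) \<Rightarrow>
      ((tvar * w^2 - z^2)^2, 4 * z * w * (w - z) * (tvar * w - z)))"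

definition F1 :: "complex poly \<Rightarrow> complex poly \<Rightarrow> complex poly \<times> complex poly" where
  "F1 c1 c2 = (case Fmap (c1, c2) of (a, b) \<Rightarrow> (a div gcd a b, b div gcd a b))"

definition Fn :: "complex poly \<Rightarrow> complex poly \<Rightarrow> nat \<Rightarrow> complex poly \<times> complex poly" where
  "Fn c1 c2 n = (Fmap ^^ (n - 1)) (F1 c1 c2)"

end

theory Submission
  imports Defs
begin

text \<open>Only the factor t w of F depends on t, so the constant coefficients E, C and the
  linear coefficient D of F_n(t,1) obey the closed recursion E' = E^4,
  C' = -4 E^2 C (C - E), D' = -2 E^2 (C^2 - 2 E D).  Hence E_n = P_1(0,1)^(4^(n-1)), and
  b = max |C| |D| satisfies b' \<le> 4 |E|^2 b (b + |E|).  From 8 b \<le> M |E| with M \<ge> 8 this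
  gives 8 b' \<le> M^2 |E'|, so as soon as such an M exists (at n = 1, or at n = 2 if E_1 = 0,
  since then C_2 = D_2 = 0) we get b_n \<le> K^(2^(n-1)) |E_n|, and the factor K^(2^(n-1))
  disappears under the 4^(n-1)-th root.  Nothing is used about c beyond the definition of F_1.\<close>

lemma coeff_0_fst_Fmap: "coeff (fst (Fmap zw)) 0 = coeff (fst zw) 0 ^ 4"
  by (simp add: Fmap_def tvar_def split_def flip: poly_0_coeff_0)

lemma coeff_0_snd_Fmap:
  "coeff (snd (Fmap zw)) 0
    = - 4 * coeff (fst zw) 0 ^ 2 * coeff (snd zw) 0 * (coeff (snd zw) 0 - coeff (fst zw) 0)"
  by (simp add: Fmap_def tvar_def split_def flip: poly_0_coeff_0) algebra

lemma coeff_1_fst_Fmap: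
  "coeff (fst (Fmap zw)) 1
    = - 2 * coeff (fst zw) 0 ^ 2 * (coeff (snd zw) 0 ^ 2 - 2 * coeff (fst zw) 0 * coeff (fst zw) 1)"
proof (cases zw)
  case (Pair z w)
  have coeff_1: "coeff p 1 = poly (pderiv p) 0" for p :: "complex poly"
    by (simp add: poly_0_coeff_0 coeff_pderiv)
  have "coeff (fst (Fmap (z, w))) 1 = poly (pderiv ((tvar * w ^ 2 - z ^ 2) ^ 2)) 0"
    by (simp only: Fmap_def prod.case fst_conv coeff_1)
  also have "\<dots> = - 2 * poly z 0 ^ 2 * (poly w 0 ^ 2 - 2 * poly z 0 * poly (pderiv z) 0)"
    by (simp add: tvar_def pderiv_pCons pderiv_power pderiv_mult pderiv_diff)
  finally show ?thesis
    by (simp add: Pair poly_0_coeff_0 coeff_pderiv)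
qed

lemma Fn_Suc: "n \<ge> 1 \<Longrightarrow> Fn c1 c2 (Suc n) = Fmap (Fn c1 c2 n)"
  unfolding Fn_def by (cases n) auto

lemma norm_coeff_0_snd_Fmap_le:
  fixes e c d :: "'a :: real_normed_field"
  shows "norm (- 4 * e ^ 2 * c * (c - e))
    \<le> 4 * norm e ^ 2 * max (norm c) (norm d) * (max (norm c) (norm d) + norm e)"
proof -
  have "norm (- 4 * e ^ 2 * c * (c - e)) = 4 * norm e ^ 2 * norm c * norm (c - e)"
    by (simp add: norm_mult norm_power)
  also have "\<dots> \<le> 4 * norm e ^ 2 * norm c * (norm c + norm e)"
    by (intro mult_left_mono norm_triangle_ineq4) auto
  also have "\<dots> \<le> 4 * norm e ^ 2 * (max (norm c) (norm d) * (max (norm c) (norm d) + norm e))"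
    unfolding mult.assoc by (intro mult_left_mono mult_mono add_right_mono) (auto simp: le_max_iff_disj)
  finally show ?thesis by (simp add: mult.assoc)
qed

lemma norm_coeff_1_fst_Fmap_le:
  fixes e c d :: "'a :: real_normed_field"
  shows "norm (- 2 * e ^ 2 * (c ^ 2 - 2 * e * d))
    \<le> 4 * norm e ^ 2 * max (norm c) (norm d) * (max (norm c) (norm d) + norm e)"
proof -
  define b where "b = max (norm c) (norm d)"
  have "norm (c ^ 2 - 2 * e * d) \<le> norm c ^ 2 + 2 * norm e * norm d"
    using norm_triangle_ineq4 [of "c ^ 2" "2 * e * d"] by (simp add: norm_mult norm_power)
  also have "\<dots> \<le> b ^ 2 + 2 * norm e * b"
    unfolding b_def by (intro add_mono power_mono mult_left_mono) auto
  also have "\<dots> \<le> 2 * (b * (b + norm e))"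
    by (simp add: algebra_simps power2_eq_square b_def)
  finally have "norm (c ^ 2 - 2 * e * d) \<le> 2 * (b * (b + norm e))" .
  then have "2 * norm e ^ 2 * norm (c ^ 2 - 2 * e * d) \<le> 2 * norm e ^ 2 * (2 * (b * (b + norm e)))"
    by (intro mult_left_mono) auto
  then show ?thesis
    by (simp add: norm_mult norm_power b_def mult_ac)
qed

lemma iterated_fourth_power:
  fixes e :: "nat \<Rightarrow> 'a :: monoid_mult"
  assumes "\<And>n. n \<ge> 1 \<Longrightarrow> e (Suc n) = e n ^ 4" and "n \<ge> 1"
  shows "e n = e 1 ^ 4 ^ (n - 1)"
  using \<open>n \<ge> 1\<close>
proof (induction n rule: dec_induct)
  case (step n)
  have "(4::nat) ^ (Suc n - 1) = 4 ^ (n - 1) * 4"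
    using step.hyps(1) by (cases n) auto
  then show ?case
    using assms(1) [OF step.hyps(1)] step.IH by (simp add: power_mult)
qed simp

lemma quartic_growth_step:
  fixes b e M :: real
  assumes "b \<ge> 0" "e \<ge> 0" "M \<ge> 8" "8 * b \<le> M * e"
  shows "32 * e ^ 2 * b * (b + e) \<le> M ^ 2 * e ^ 4"
proof -
  have "8 * b * (8 * b + 8 * e) \<le> (M * e) * (M * e + 8 * e)"
    by (rule mult_mono) (use assms in auto)
  also have "\<dots> = M * (M + 8) * e ^ 2"
    by (simp add: algebra_simps power2_eq_square)
  also have "\<dots> \<le> 2 * M ^ 2 * e ^ 2"
    using assms by (intro mult_right_mono) (auto simp: power2_eq_square)
  finally have "64 * (b * (b + e)) \<le> 2 * M ^ 2 * e ^ 2"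
    by (simp add: algebra_simps)
  then have "e ^ 2 * (64 * (b * (b + e))) \<le> e ^ 2 * (2 * M ^ 2 * e ^ 2)"
    by (intro mult_left_mono) auto
  then show ?thesis
    by (simp add: algebra_simps power4_eq_xxxx power2_eq_square)
qed

lemma quartic_growth_bound:
  fixes b e :: "nat \<Rightarrow> real" and K :: real
  assumes e_rec: "\<And>n. n \<ge> n0 \<Longrightarrow> e (Suc n) = e n ^ 4"
    and b_rec: "\<And>n. n \<ge> n0 \<Longrightarrow> b (Suc n) \<le> 4 * e n ^ 2 * b n * (b n + e n)"
    and b_nonneg: "\<And>n. b n \<ge> 0" and e_nonneg: "\<And>n. e n \<ge> 0"
    and "K \<ge> 8" and start: "8 * b n0 \<le> K * e n0"
    and "n \<ge> n0"
  shows "8 * b n \<le> K ^ (2 ^ (n - n0)) * e n"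
  using \<open>n \<ge> n0\<close>
proof (induction n rule: dec_induct)
  case base
  then show ?case using start by simp
next
  case (step n)
  define M where "M = K ^ (2 ^ (n - n0))"
  have "K \<le> M"
    unfolding M_def using \<open>K \<ge> 8\<close> by (intro self_le_power) auto
  then have "32 * e n ^ 2 * b n * (b n + e n) \<le> M ^ 2 * e n ^ 4"
    using step.IH \<open>K \<ge> 8\<close> b_nonneg e_nonneg unfolding M_def by (intro quartic_growth_step) auto
  then have "8 * b (Suc n) \<le> M ^ 2 * e n ^ 4"
    using b_rec [OF step.hyps(1)] by linarith
  moreover have "M ^ 2 = K ^ (2 ^ (Suc n - n0))"
    using step.hyps(1) by (simp add: M_def Suc_diff_le mult.commute flip: power_mult)
  ultimately show ?case
    using e_rec [OF step.hyps(1)] by simp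
qed

lemma quartic_growth_eventually_bounded:
  fixes b e :: "nat \<Rightarrow> real"
  assumes "\<And>n. n \<ge> 1 \<Longrightarrow> e (Suc n) = e n ^ 4"
    and b_rec: "\<And>n. n \<ge> 1 \<Longrightarrow> b (Suc n) \<le> 4 * e n ^ 2 * b n * (b n + e n)"
    and b_nonneg: "\<And>n. b n \<ge> 0" and e_nonneg: "\<And>n. e n \<ge> 0"
  obtains K n0 where "K \<ge> 8" and "\<And>n. n \<ge> n0 \<Longrightarrow> b n \<le> K ^ (2 ^ (n - 1)) * e n"
proof -
  obtain K n0 where "K \<ge> 8" "n0 \<ge> 1" "8 * b n0 \<le> K * e n0"
  proof (cases "e 1 = 0")
    case True
    then have "b 2 = 0"
      using b_rec [of 1] b_nonneg [of 2] by (simp add: numeral_2_eq_2)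
    then show ?thesis using e_nonneg [of 2] by (intro that [of 8 2]) auto
  next
    case False
    then have "e 1 > 0" using e_nonneg [of 1] by simp
    then have "8 * b 1 \<le> max 8 (8 * b 1 / e 1) * e 1"
      by (simp add: field_simps max_def)
    then show ?thesis by (intro that [of "max 8 (8 * b 1 / e 1)" 1]) auto
  qed
  have "b n \<le> K ^ (2 ^ (n - 1)) * e n" if "n \<ge> n0" for n
  proof -
    have "8 * b n \<le> K ^ (2 ^ (n - n0)) * e n"
      by (rule quartic_growth_bound) (use assms \<open>K \<ge> 8\<close> \<open>n0 \<ge> 1\<close> \<open>8 * b n0 \<le> K * e n0\<close> that in auto)
    also have "\<dots> \<le> K ^ (2 ^ (n - 1)) * e n"
      using \<open>K \<ge> 8\<close> \<open>n0 \<ge> 1\<close> e_nonneg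
      by (intro mult_right_mono power_increasing) auto
    finally show ?thesis using b_nonneg [of n] by linarith
  qed
  with \<open>K \<ge> 8\<close> show ?thesis by (rule that)
qed

lemma power_powr:
  fixes x r :: real
  assumes "x > 0"
  shows "(x ^ m) powr r = x powr (real m * r)"
  using assms by (simp add: powr_realpow [symmetric] powr_powr)

lemma power_powr_inverse:
  fixes x :: real
  assumes "x \<ge> 0" and "m > 0"
  shows "(x ^ m) powr (1 / real m) = x"
  using assms by (cases "x = 0") (simp_all add: power_powr)

lemma limsup_root_le:
  fixes X :: "nat \<Rightarrow> real" and K e :: real
  assumes "K > 0" and "e \<ge> 0" and "\<And>n. X n \<ge> 0"
    and bound: "\<And>n. n \<ge> N \<Longrightarrow> X n \<le> K ^ (2 ^ (n - 1)) * e ^ (4 ^ (n - 1))"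
  shows "limsup (\<lambda>n. ereal (X n powr (1 / 4 ^ (n - 1)))) \<le> ereal e"
proof -
  define g where "g n = K powr (1 / 2 ^ (n - 1)) * e" for n
  have root_bound: "X n powr (1 / 4 ^ (n - 1)) \<le> g n" if "n \<ge> N" for n
  proof -
    have "(2::real) ^ (n - 1) / 4 ^ (n - 1) = 1 / 2 ^ (n - 1)"
      by (simp add: field_simps flip: power_mult_distrib)
    then have K_root: "(K ^ (2 ^ (n - 1))) powr (1 / 4 ^ (n - 1)) = K powr (1 / 2 ^ (n - 1))"
      using \<open>K > 0\<close> by (simp add: power_powr)
    have "X n powr (1 / 4 ^ (n - 1)) \<le> (K ^ (2 ^ (n - 1)) * e ^ (4 ^ (n - 1))) powr (1 / 4 ^ (n - 1))"
      using bound [OF that] \<open>X n \<ge> 0\<close> by (intro powr_mono2) auto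
    also have "\<dots> = (K ^ (2 ^ (n - 1))) powr (1 / 4 ^ (n - 1)) * (e ^ (4 ^ (n - 1))) powr (1 / 4 ^ (n - 1))"
      using \<open>K > 0\<close> \<open>e \<ge> 0\<close> by (simp add: powr_mult)
    also have "\<dots> = g n"
      using power_powr_inverse [OF \<open>e \<ge> 0\<close>, of "4 ^ (n - 1)"] by (simp only: K_root g_def) simp
    finally show ?thesis .
  qed
  have "(\<lambda>n. 1 / 2 ^ (n - 1) :: real) \<longlonglongrightarrow> 0"
    by (rule LIMSEQ_offset [where k = 1]) (simp add: LIMSEQ_divide_realpow_zero)
  then have "(\<lambda>n. K powr (1 / 2 ^ (n - 1))) \<longlonglongrightarrow> K powr 0"
    using \<open>K > 0\<close> by (intro tendsto_powr tendsto_const) auto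
  then have "g \<longlonglongrightarrow> 1 * e"
    unfolding g_def using \<open>K > 0\<close> by (intro tendsto_mult_right) simp
  then have "g \<longlonglongrightarrow> e" by simp
  then have "limsup (\<lambda>n. ereal (g n)) = ereal e"
    by (intro lim_imp_Limsup) (auto simp: tendsto_ereal)
  moreover have "limsup (\<lambda>n. ereal (X n powr (1 / 4 ^ (n - 1)))) \<le> limsup (\<lambda>n. ereal (g n))"
    using root_bound by (intro Limsup_mono) (auto simp: eventually_sequentially)
  ultimately show ?thesis by simp
qed

theorem lemma4p6:
  fixes c1 c2 :: "complex poly"
  assumes "c2 \<noteq> 0" and "coprime c1 c2"
    and "c1 \<noteq> 0" and "c1 \<noteq> c2" and "c1 \<noteq> tvar * c2"
  defines "P1 \<equiv> fst (F1 c1 c2)"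
    and "E \<equiv> (\<lambda>n. coeff (fst (Fn c1 c2 n)) 0)"
    and "D \<equiv> (\<lambda>n. coeff (fst (Fn c1 c2 n)) 1)"
    and "C \<equiv> (\<lambda>n. coeff (snd (Fn c1 c2 n)) 0)"
  shows "(\<forall>n\<ge>1. E n = poly P1 0 ^ (4 ^ (n - 1)))
    \<and> limsup (\<lambda>n. ereal (cmod (C n) powr (1 / 4 ^ (n - 1)))) \<le> ereal (cmod (poly P1 0))
    \<and> limsup (\<lambda>n. ereal (cmod (D n) powr (1 / 4 ^ (n - 1)))) \<le> ereal (cmod (poly P1 0))"
proof -
  have E_Suc: "E (Suc n) = E n ^ 4" if "n \<ge> 1" for n
    unfolding E_def Fn_Suc [OF that] coeff_0_fst_Fmap ..
  have E_pow: "E n = poly P1 0 ^ 4 ^ (n - 1)" if "n \<ge> 1" for n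
    using iterated_fourth_power [of E, OF E_Suc that]
    by (simp add: E_def P1_def Fn_def poly_0_coeff_0)
  have C_Suc: "C (Suc n) = - 4 * E n ^ 2 * C n * (C n - E n)" if "n \<ge> 1" for n
    unfolding C_def E_def Fn_Suc [OF that] coeff_0_snd_Fmap ..
  have D_Suc: "D (Suc n) = - 2 * E n ^ 2 * (C n ^ 2 - 2 * E n * D n)" if "n \<ge> 1" for n
    unfolding C_def D_def E_def Fn_Suc [OF that] coeff_1_fst_Fmap ..
  define b where "b n = max (cmod (C n)) (cmod (D n))" for n
  have b_Suc: "b (Suc n) \<le> 4 * cmod (E n) ^ 2 * b n * (b n + cmod (E n))" if "n \<ge> 1" for n
    using norm_coeff_0_snd_Fmap_le [of "E n" "C n" "D n"] norm_coeff_1_fst_Fmap_le [of "E n" "C n" "D n"]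
    by (simp add: b_def C_Suc [OF that] D_Suc [OF that])
  obtain K n0 where "K \<ge> 8" and b_bound: "\<And>n. n \<ge> n0 \<Longrightarrow> b n \<le> K ^ (2 ^ (n - 1)) * cmod (E n)"
    using quartic_growth_eventually_bounded [of "\<lambda>n. cmod (E n)" b] E_Suc b_Suc
    by (metis norm_ge_zero norm_power b_def max.coboundedI1)
  have bound: "b n \<le> K ^ (2 ^ (n - 1)) * cmod (poly P1 0) ^ (4 ^ (n - 1))" if "n \<ge> max 1 n0" for n
    using b_bound [of n] E_pow [of n] that by (simp add: norm_power)
  have "limsup (\<lambda>n. ereal (cmod (C n) powr (1 / 4 ^ (n - 1)))) \<le> ereal (cmod (poly P1 0))"
    using bound \<open>K \<ge> 8\<close> by (intro limsup_root_le [where K = K and N = "max 1 n0"]) (force simp: b_def)+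
  moreover have "limsup (\<lambda>n. ereal (cmod (D n) powr (1 / 4 ^ (n - 1)))) \<le> ereal (cmod (poly P1 0))"
    using bound \<open>K \<ge> 8\<close> by (intro limsup_root_le [where K = K and N = "max 1 n0"]) (force simp: b_def)+
  ultimately show ?thesis
    using E_pow by auto
qed

end
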